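(* Let $t$ be a term and $\vec x=x_1\dots x_n$ a vector of pairwise distinct program variables. Suppose (Det) $\vec x(1)=\vec x(2)\vdash\mathrm{wp}\,[1:t,2:t]\,\{\vec x(1)=\vec x(2)\}$, and (Idem) for every $\vec v\in\mathbb{Z}^n$, $\vec x(2)=\vec v\vdash\mathrm{wp}\,[1:t,2:t]\,\{\vec x(1)=\vec v\Rightarrow\vec x(2)=\vec v\}$. Then for every $\vec v\in\mathbb{Z}^n$, $$\vec x(1)=\vec x(2)\wedge\vec x(3)=\vec v\ \vdash\ \mathrm{wp}\,[1:t,2:t,3:t]\,\{\vec x(2)=\vec v\Rightarrow\vec x(1)=\vec x(3)\}.$$
   Context: Setting. $\mathrm{Val}=\mathbb{Z}$; $\mathrm{PVar}$ is a countably infinite set of program variables; a store is a function $s:\mathrm{PVar}\to\mathrm{Val}$; indices are $\mathrm{Idx}=\mathbb{N}$. Terms of a first-order imperative language are generated by $t ::= v \mid x \mid * \mid t\oplus t \mid \mathtt{skip}\mid x:=t \mid t;t \mid \mathtt{if}\ t\ \mathtt{then}\ t\ \mathtt{else}\ t \mid \mathtt{while}\ t\ \mathtt{do}\ t$, with a nondeterministic big-step semantics $t,s\Downarrow v,s'$ ($t$ run from $s$ may terminate with return value $v$ and final store $s'$). A hyper-term is a finitely supported partial map from $\mathrm{Idx}$ to terms, written $[i_1:t_1,\dots,i_n:t_n]$; a hyper-store is a total function $\mathbf s:\mathrm{Idx}\to\mathrm{Store}$. $\mathbf t,\mathbf s\Downarrow\mathbf v,\mathbf s'$ holds iff for every $i\in\mathrm{supp}(\mathbf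 t)$, $\mathbf t(i),\mathbf s(i)\Downarrow\mathbf v(i),\mathbf s'(i)$, and for every $i\notin\mathrm{supp}(\mathbf t)$, $\mathbf s'(i)=\mathbf s(i)$. A hyper-assertion is a predicate on hyper-stores; connectives are pointwise; $P\vdash R$ means $\forall\mathbf s.\ P(\mathbf s)\Rightarrow R(\mathbf s)$. $\mathrm{wp}\,\mathbf t\,\{Q\}(\mathbf s):\iff\forall\mathbf v,\mathbf s'.\ (\mathbf t,\mathbf s\Downarrow\mathbf v,\mathbf s')\Rightarrow Q(\mathbf s')$ for a hyper-assertion $Q$. $\vec x(i)=\vec v$ is the hyper-assertion $\forall k.\ \mathbf s(i)(x_k)=v_k$, and $\vec x(i)=\vec x(j)$ is $\forall k.\ \mathbf s(i)(x_k)=\mathbf s(j)(x_k)$. *)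

theory Defs
  imports Main
begin

type_synonym val = int
type_synonym pvar = nat
type_synonym store = "pvar \<Rightarrow> val"
type_synonym idx = nat

datatype tm =
    Val val
  | Var pvar
  | Any
  | Op "val \<Rightarrow> val \<Rightarrow> val" tm tm
  | Skip
  | Assign pvar tm
  | Seq tm tm
  | If tm tm tm
  | While tm tm

text \<open>Conventions: a nonzero guard counts as true; skip and while return 0; assignment returns the assigned value.\<close>
inductive big_step :: "tm \<Rightarrow> store \<Rightarrow> val \<Rightarrow> store \<Rightarrow> bool" where
  BVal: "big_step (Val v) s v s"
| BVar: "big_step (Var x) s (s x) s"
| BAny: "big_step Any s v s"
| BOp: "big_step t1 s v1 s1 \<Longrightarrow> big_step t2 s1 v2 s2 \<Longrightarrow> big_step (Op f t1 t2) s (f v1 v2) s2"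
| BSkip: "big_step Skip s 0 s"
| BAssign: "big_step t s v s1 \<Longrightarrow> big_step (Assign x t) s v (s1(x := v))"
| BSeq: "big_step t1 s v1 s1 \<Longrightarrow> big_step t2 s1 v2 s2 \<Longrightarrow> big_step (Seq t1 t2) s v2 s2"
| BIfT: "big_step b s vb s1 \<Longrightarrow> vb \<noteq> 0 \<Longrightarrow> big_step t1 s1 v s2 \<Longrightarrow> big_step (If b t1 t2) s v s2"
| BIfF: "big_step b s vb s1 \<Longrightarrow> vb = 0 \<Longrightarrow> big_step t2 s1 v s2 \<Longrightarrow> big_step (If b t1 t2) s v s2"
| BWhileF: "big_step b s vb s1 \<Longrightarrow> vb = 0 \<Longrightarrow> big_step (While b c) s 0 s1"
| BWhileT: "big_step b s vb s1 \<Longrightarrow> vb \<noteq> 0 \<Longrightarrow> big_step c s1 vc s2 \<Longrightarrow>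
            big_step (While b c) s2 v s3 \<Longrightarrow> big_step (While b c) s v s3"

type_synonym hterm = "idx \<Rightarrow> tm option"
type_synonym hstore = "idx \<Rightarrow> store"
type_synonym hval = "idx \<Rightarrow> val"
type_synonym hassn = "hstore \<Rightarrow> bool"

definition hyper_term :: "hterm \<Rightarrow> bool" where
  "hyper_term ht \<longleftrightarrow> finite (dom ht)"

definition hbig_step :: "hterm \<Rightarrow> hstore \<Rightarrow> hval \<Rightarrow> hstore \<Rightarrow> bool" where
  "hbig_step ht hs hv hs' \<longleftrightarrow>
     (\<forall>i t. ht i = Some t \<longrightarrow> big_step t (hs i) (hv i) (hs' i)) \<and>
     (\<forall>i. ht i = None \<longrightarrow> hs' i = hs i)"

definition wp :: "hterm \<Rightarrow> hassn \<Rightarrow> hassn" where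
  "wp ht Q hs \<longleftrightarrow> (\<forall>hv hs'. hbig_step ht hs hv hs' \<longrightarrow> Q hs')"

definition entails :: "hassn \<Rightarrow> hassn \<Rightarrow> bool" (infix "\<turnstile>\<^sub>h" 40) where
  "P \<turnstile>\<^sub>h R \<longleftrightarrow> (\<forall>hs. P hs \<longrightarrow> R hs)"

definition vars_eq_vals :: "pvar list \<Rightarrow> idx \<Rightarrow> val list \<Rightarrow> hassn" where
  "vars_eq_vals xs i vs hs \<longleftrightarrow> (\<forall>k < length xs. hs i (xs ! k) = vs ! k)"

definition vars_eq :: "pvar list \<Rightarrow> idx \<Rightarrow> idx \<Rightarrow> hassn" where
  "vars_eq xs i j hs \<longleftrightarrow> (\<forall>k < length xs. hs i (xs ! k) = hs j (xs ! k))"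

end

theory Submission
  imports Defs
begin

text \<open>Run copies 1 and 2 of \<open>t\<close> side by side: (Det) makes \<open>x\<close> agree in their final
stores. Now view copies 2 and 3 as a two-copy execution whose second component starts
from \<open>x = v\<close>: if copy 2 ends with \<open>x = v\<close>, (Idem) forces copy 3 to end with \<open>x = v\<close> too.
Hence \<open>x\<close> agrees in copies 1 and 3.\<close>

lemma hbig_stepD:
  assumes "hbig_step ht hs hv hs'" and "ht i = Some t"
  shows "big_step t (hs i) (hv i) (hs' i)"
  using assms unfolding hbig_step_def by blast

lemma wp_pairD:
  assumes "wp [1 \<mapsto> t1, 2 \<mapsto> t2] Q hs"
    and "hs 1 = s1" and "big_step t1 s1 v1 s1'"
    and "hs 2 = s2" and "big_step t2 s2 v2 s2'"
  shows "Q (hs(1 := s1', 2 := s2'))"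
proof -
  have "hbig_step [1 \<mapsto> t1, 2 \<mapsto> t2] hs (\<lambda>i. if i = 1 then v1 else v2) (hs(1 := s1', 2 := s2'))"
    using assms(2-5) unfolding hbig_step_def by auto
  then show ?thesis
    using assms(1) unfolding wp_def by blast
qed

theorem mainTheorem19:
  fixes t :: tm and xs :: "pvar list"
  assumes dist: "distinct xs"
    and Det: "vars_eq xs 1 2 \<turnstile>\<^sub>h wp [1 \<mapsto> t, 2 \<mapsto> t] (vars_eq xs 1 2)"
    and Idem: "\<forall>vs. length vs = length xs \<longrightarrow>
        (vars_eq_vals xs 2 vs \<turnstile>\<^sub>h
           wp [1 \<mapsto> t, 2 \<mapsto> t] (\<lambda>hs. vars_eq_vals xs 1 vs hs \<longrightarrow> vars_eq_vals xs 2 vs hs))"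
  shows "\<forall>vs. length vs = length xs \<longrightarrow>
        ((\<lambda>hs. vars_eq xs 1 2 hs \<and> vars_eq_vals xs 3 vs hs) \<turnstile>\<^sub>h
           wp [1 \<mapsto> t, 2 \<mapsto> t, 3 \<mapsto> t] (\<lambda>hs. vars_eq_vals xs 2 vs hs \<longrightarrow> vars_eq xs 1 3 hs))"
proof (intro allI impI, unfold entails_def wp_def, intro allI impI)
  fix vs hs hv hs'
  assume len: "length vs = length xs"
    and pre: "vars_eq xs 1 2 hs \<and> vars_eq_vals xs 3 vs hs"
    and run: "hbig_step [1 \<mapsto> t, 2 \<mapsto> t, 3 \<mapsto> t] hs hv hs'"
    and post2: "vars_eq_vals xs 2 vs hs'"
  have run1: "big_step t (hs 1) (hv 1) (hs' 1)" and run2: "big_step t (hs 2) (hv 2) (hs' 2)"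
    and run3: "big_step t (hs 3) (hv 3) (hs' 3)"
    using hbig_stepD[OF run] by (simp_all add: eval_nat_numeral)
  have "vars_eq xs 1 2 (hs(1 := hs' 1, 2 := hs' 2))"
    using wp_pairD[OF _ refl run1 refl run2] Det pre unfolding entails_def by blast
  then have eq12: "vars_eq xs 1 2 hs'"
    unfolding vars_eq_def by simp
  let ?hs23 = "hs(1 := hs 2, 2 := hs 3)"
  have "vars_eq_vals xs 2 vs ?hs23"
    using pre unfolding vars_eq_vals_def by simp
  then have "wp [1 \<mapsto> t, 2 \<mapsto> t]
      (\<lambda>hs. vars_eq_vals xs 1 vs hs \<longrightarrow> vars_eq_vals xs 2 vs hs) ?hs23"
    using Idem len unfolding entails_def by blast
  from wp_pairD[OF this _ run2 _ run3]
  have "vars_eq_vals xs 1 vs (?hs23(1 := hs' 2, 2 := hs' 3))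
      \<longrightarrow> vars_eq_vals xs 2 vs (?hs23(1 := hs' 2, 2 := hs' 3))"
    by simp
  then have post3: "vars_eq_vals xs 3 vs hs'"
    using post2 unfolding vars_eq_vals_def by simp
  show "vars_eq xs 1 3 hs'"
    using eq12 post2 post3 unfolding vars_eq_def vars_eq_vals_def by simp
qed

end
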